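(* Let $F$ be a field, $n\ge1$, and $g\in\mathrm{GL}_n(F)$. Suppose that $\lambda\in F$, $\lambda\neq0$, and that $g-\lambda 1$ has rank $r$. Let $\varphi_1,\varphi_2$ be non-negative real numbers with $\varphi_1+\varphi_2=r$. Then: (a) there exist $h,k\in\mathrm{GL}_n(F)$ with $g=hk$ such that $|\mathrm{rk}(h-\lambda1)-\varphi_1|\le2$ and $|\mathrm{rk}(k-1)-\varphi_2|\le2$; (b) if moreover $g\in\mathrm{SL}_n(F)$, then there exist $h,k\in\mathrm{SL}_n(F)$ with $g=hk$ such that $|\mathrm{rk}(h-\lambda1)-\varphi_1|\le3$ and $|\mathrm{rk}(k-1)-\varphi_2|\le3$.
   Context: $1$ denotes the $n\times n$ identity matrix. *)

theory Defs
  imports "Jordan_Normal_Form.DL_Rank"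
begin

definition GL :: "nat \<Rightarrow> 'a::field mat set" where
  "GL n = {A \<in> carrier_mat n n. invertible_mat A}"

definition SL :: "nat \<Rightarrow> 'a::field mat set" where
  "SL n = {A \<in> carrier_mat n n. det A = 1}"

end

theory Submission
  imports Defs
begin

(*
  Write A = h - lam 1. If A \<noteq> 0, pick v = A x \<noteq> 0 and a covector z with z v = 1 and z (h v) \<noteq> 0.
  By Wedderburn's rank-one reduction, E = v (z A) satisfies rk (A - E) = rk A - 1, and
  A - E = h - lam t for t = 1 + lam\<inverse> E, which is invertible precisely because z (h v) \<noteq> 0.
  So replacing a factorization g = h k by g = (h t\<inverse>) (t k) lowers rk (h - lam 1) by one
  while raising rk (k - 1) by at most one. Starting from g = g 1 and doing this \<lfloor>phi2\<rfloor> times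
  gives (a), because rk (g - lam 1) \<le> rk (h - lam 1) + rk (k - 1) pins both ranks to within
  one of their targets. For (b), the factor det k is moved across the product by the
  diagonal matrix diag (det k, 1, ..., 1), which changes each rank by at most one.
*)

lemma smult_one_mult_mat_vec:
  fixes v :: "'a::comm_ring_1 vec"
  assumes "v \<in> carrier_vec n"
  shows "(c \<cdot>\<^sub>m 1\<^sub>m n) *\<^sub>v v = c \<cdot>\<^sub>v v"
  using assms by (intro eq_vecI)
    (auto simp: scalar_prod_def if_distrib[of "\<lambda>x. _ * x * _"] cong: if_cong)

lemma mult_inverse_pair_cancel:
  fixes A B C D :: "'a::semiring_1 mat"
  assumes "A \<in> carrier_mat m n" "B \<in> carrier_mat n n" "C \<in> carrier_mat n n" "D \<in> carrier_mat n k"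
    and "B * C = 1\<^sub>m n"
  shows "A * B * (C * D) = A * D"
proof -
  have "A * B * (C * D) = A * (B * (C * D))" by (rule assoc_mult_mat) (use assms in auto)
  also have "B * (C * D) = B * C * D" by (rule assoc_mult_mat[symmetric]) (use assms in auto)
  finally show ?thesis using assms by simp
qed

lemma one_plus_smult_mult_one_plus_smult:
  fixes E :: "'a::comm_ring_1 mat"
  assumes E: "E \<in> carrier_mat n n" and EE: "E * E = c \<cdot>\<^sub>m E" and ab: "a + b + a * b * c = 0"
  shows "(1\<^sub>m n + a \<cdot>\<^sub>m E) * (1\<^sub>m n + b \<cdot>\<^sub>m E) = 1\<^sub>m n"
proof -
  have "(1\<^sub>m n + a \<cdot>\<^sub>m E) * (1\<^sub>m n + b \<cdot>\<^sub>m E)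
      = 1\<^sub>m n * (1\<^sub>m n + b \<cdot>\<^sub>m E) + (a \<cdot>\<^sub>m E) * (1\<^sub>m n + b \<cdot>\<^sub>m E)"
    by (rule add_mult_distrib_mat) (use E in auto)
  also have "(a \<cdot>\<^sub>m E) * (1\<^sub>m n + b \<cdot>\<^sub>m E) = a \<cdot>\<^sub>m (E * (1\<^sub>m n + b \<cdot>\<^sub>m E))"
    by (rule mult_smult_assoc_mat) (use E in auto)
  also have "E * (1\<^sub>m n + b \<cdot>\<^sub>m E) = E * 1\<^sub>m n + E * (b \<cdot>\<^sub>m E)"
    by (rule mult_add_distrib_mat) (use E in auto)
  also have "E * (b \<cdot>\<^sub>m E) = b \<cdot>\<^sub>m (c \<cdot>\<^sub>m E)"
    using E EE by (simp add: mult_smult_distrib)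
  also have "1\<^sub>m n * (1\<^sub>m n + b \<cdot>\<^sub>m E) + a \<cdot>\<^sub>m (E * 1\<^sub>m n + b \<cdot>\<^sub>m (c \<cdot>\<^sub>m E))
      = 1\<^sub>m n + (a + b + a * b * c) \<cdot>\<^sub>m E"
    using E by (intro eq_matI) (auto simp: algebra_simps)
  finally show ?thesis using E ab by (intro eq_matI) auto
qed

lemma exists_scalar_prod_nonzero_both:
  fixes u v :: "'a::comm_ring_1 vec"
  assumes u: "u \<in> carrier_vec n" "u \<noteq> 0\<^sub>v n" and v: "v \<in> carrier_vec n" "v \<noteq> 0\<^sub>v n"
  shows "\<exists>z \<in> carrier_vec n. z \<bullet> u \<noteq> 0 \<and> z \<bullet> v \<noteq> 0"
proof -
  obtain i where i: "i < n" "u $ i \<noteq> 0" using u by (metis carrier_vecD eq_vecI index_zero_vec)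
  obtain p where p: "p < n" "v $ p \<noteq> 0" using v by (metis carrier_vecD eq_vecI index_zero_vec)
  consider "v $ i \<noteq> 0" | "u $ p \<noteq> 0" | "v $ i = 0" "u $ p = 0" by blast
  then show ?thesis
  proof cases
    case 1
    then show ?thesis using i u v by (intro bexI[of _ "unit_vec n i"]) (auto simp: scalar_prod_left_unit)
  next
    case 2
    then show ?thesis using p u v by (intro bexI[of _ "unit_vec n p"]) (auto simp: scalar_prod_left_unit)
  next
    case 3
    then show ?thesis using i p u v
      by (intro bexI[of _ "unit_vec n i + unit_vec n p"])
        (auto simp: add_scalar_prod_distrib[of _ n] scalar_prod_left_unit)
  qed
qed

definition outer_mat :: "'a::comm_semiring_0 vec \<Rightarrow> 'a vec \<Rightarrow> 'a mat" where
  "outer_mat v w = mat (dim_vec v) (dim_vec w) (\<lambda>(i, j). v $ i * w $ j)"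

lemma outer_mat_carrier [simp]:
  "v \<in> carrier_vec n \<Longrightarrow> w \<in> carrier_vec m \<Longrightarrow> outer_mat v w \<in> carrier_mat n m"
  by (simp add: outer_mat_def)

lemma outer_mat_mult_vec:
  assumes "w \<in> carrier_vec m" and "y \<in> carrier_vec m"
  shows "outer_mat v w *\<^sub>v y = (w \<bullet> y) \<cdot>\<^sub>v v"
  using assms by (intro eq_vecI)
    (auto simp: outer_mat_def scalar_prod_def sum_distrib_left mult_ac)

lemma outer_mat_mult_outer_mat:
  assumes "v \<in> carrier_vec n" and "w \<in> carrier_vec n"
  shows "outer_mat v w * outer_mat v w = (w \<bullet> v) \<cdot>\<^sub>m outer_mat v w"
  using assms by (intro eq_matI)
    (auto simp: outer_mat_def scalar_prod_def sum_distrib_left sum_distrib_right mult_ac)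

lemma GLI:
  fixes A :: "'a::field mat"
  assumes "A \<in> carrier_mat n n" "B \<in> carrier_mat n n" "A * B = 1\<^sub>m n" "B * A = 1\<^sub>m n"
  shows "A \<in> GL n"
  using assms unfolding GL_def invertible_mat_def inverts_mat_def by auto

lemma GLE:
  fixes A :: "'a::field mat"
  assumes "A \<in> GL n"
  obtains B where "A \<in> carrier_mat n n" "B \<in> carrier_mat n n" "A * B = 1\<^sub>m n" "B * A = 1\<^sub>m n"
proof -
  have A: "A \<in> carrier_mat n n" using assms by (simp add: GL_def)
  obtain B where B: "A * B = 1\<^sub>m n" "B * A = 1\<^sub>m (dim_row B)"
    using assms A unfolding GL_def invertible_mat_def inverts_mat_def by auto
  have "B \<in> carrier_mat n n"
    using A B by (metis carrier_matD carrier_matI index_mult_mat(2,3) index_one_mat(2,3))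
  then show ?thesis using that A B by auto
qed

lemma GL_iff_det:
  fixes A :: "'a::field mat"
  shows "A \<in> GL n \<longleftrightarrow> A \<in> carrier_mat n n \<and> det A \<noteq> 0"
proof
  assume "A \<in> GL n"
  then obtain B where "A \<in> carrier_mat n n" "B \<in> carrier_mat n n" "A * B = 1\<^sub>m n" "B * A = 1\<^sub>m n"
    by (rule GLE)
  then show "A \<in> carrier_mat n n \<and> det A \<noteq> 0"
    using unit_imp_det_non_zero[of A n "()"] by (auto simp: Units_def ring_mat_simps)
next
  assume "A \<in> carrier_mat n n \<and> det A \<noteq> 0"
  then show "A \<in> GL n"
    using det_non_zero_imp_unit[of A n "()"] GLI[of A n] by (auto simp: Units_def ring_mat_simps)
qed

lemma GL_mult:
  fixes A B :: "'a::field mat"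
  assumes "A \<in> GL n" and "B \<in> GL n"
  shows "A * B \<in> GL n"
  using assms det_mult[of A n B] by (auto simp: GL_iff_det)

context vec_space
begin

lemma span_cols_eq_image:
  assumes A: "A \<in> carrier_mat n nc"
  shows "span (set (cols A)) = {A *\<^sub>v y | y. y \<in> carrier_vec nc}"
proof -
  have cs: "set (cols A) \<subseteq> carrier_vec n" using A cols_dim by blast
  have dims: "\<forall>w\<in>set (cols A). dim_vec w = n" using cs by auto
  have lincomb: "lincomb_list c (cols A) = A *\<^sub>v vec nc c" for c
    using lincomb_list_as_mat_mult[OF dims, of c] A mat_of_cols_cols[of A] by auto
  have "span (set (cols A)) = span_list (cols A)" using span_list_as_span[OF cs] by simp
  also have "\<dots> = {A *\<^sub>v y | y. y \<in> carrier_vec nc}"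
  proof safe
    fix x assume "x \<in> span_list (cols A)"
    then show "\<exists>y. x = A *\<^sub>v y \<and> y \<in> carrier_vec nc"
      unfolding span_list_def using lincomb by auto
  next
    fix y :: "'a vec" assume y: "y \<in> carrier_vec nc"
    have "vec nc (\<lambda>i. y $ i) = y" using y by auto
    then have "A *\<^sub>v y = lincomb_list (\<lambda>i. y $ i) (cols A)" using lincomb by metis
    then show "A *\<^sub>v y \<in> span_list (cols A)" unfolding span_list_def by auto
  qed
  finally show ?thesis .
qed

lemma rank_lin_indpt_colsE:
  assumes A: "A \<in> carrier_mat n nc"
  obtains T where "T \<subseteq> set (cols A)" "lin_indpt T" "rank A = card T"
proof -
  obtain T where T: "maximal T (\<lambda>T. T \<subseteq> set (cols A) \<and> lin_indpt T)"
    using maximal_exists[of "\<lambda>T. T \<subseteq> set (cols A) \<and> lin_indpt T" "card (set (cols A))" "{}"]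
    by (meson List.finite_set card_mono empty_iff empty_subsetI finite_lin_indpt2 rev_finite_subset)
  then show ?thesis
    using that rank_card_indpt[OF A T] unfolding maximal_def by blast
qed

lemma card_le_rank_of_span:
  assumes A: "A \<in> carrier_mat n nc" and T: "T \<subseteq> span (set (cols A))" and li: "lin_indpt T"
  shows "card T \<le> rank A"
proof -
  have csA: "set (cols A) \<subseteq> carrier_vec n" using A cols_dim by blast
  have Tc: "T \<subseteq> carrier_vec n" using T span_is_subset2[OF csA] by auto
  obtain ts where ts: "set ts = T" using fin_dim_li_fin[OF fin_dim li] Tc finite_list by auto
  define M where "M = mat_of_cols n (cols A @ ts)"
  have M: "M \<in> carrier_mat n (nc + length ts)" unfolding M_def using A by auto
  have cM: "set (cols M) = set (cols A) \<union> T"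
    unfolding M_def using cols_mat_of_cols[of "cols A @ ts" n] csA Tc ts by auto
  have "span (set (cols M)) = span (set (cols A))"
  proof
    show "span (set (cols M)) \<subseteq> span (set (cols A))"
      using span_subsetI[OF csA] cM T in_own_span[OF csA] by auto
    show "span (set (cols A)) \<subseteq> span (set (cols M))"
      using span_is_monotone[of "set (cols A)" "set (cols M)"] cM by auto
  qed
  then have "rank M = rank A" unfolding rank_def by simp
  then show ?thesis using rank_ge_card_indpt[OF M _ li] cM by auto
qed

lemma rank_le_of_span:
  assumes A: "A \<in> carrier_mat n na" and B: "B \<in> carrier_mat n nb"
    and sub: "set (cols B) \<subseteq> span (set (cols A))"
  shows "rank B \<le> rank A"
proof -
  obtain T where "T \<subseteq> set (cols B)" "lin_indpt T" "rank B = card T"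
    using rank_lin_indpt_colsE[OF B] .
  then show ?thesis using card_le_rank_of_span[OF A, of T] sub by auto
qed

lemma rank_less_of_span:
  assumes A: "A \<in> carrier_mat n na" and B: "B \<in> carrier_mat n nb"
    and sub: "set (cols B) \<subseteq> span (set (cols A))"
    and v: "v \<in> span (set (cols A))" and nv: "v \<notin> span (set (cols B))"
  shows "rank B < rank A"
proof -
  have csA: "set (cols A) \<subseteq> carrier_vec n" using A cols_dim by blast
  have csB: "set (cols B) \<subseteq> carrier_vec n" using B cols_dim by blast
  have vc: "v \<in> carrier_vec n" using v span_is_subset2[OF csA] by auto
  obtain T where TB: "T \<subseteq> set (cols B)" "lin_indpt T" and rB: "rank B = card T"
    using rank_lin_indpt_colsE[OF B] .
  have vT: "v \<notin> span T" using nv span_is_monotone[OF TB(1)] by auto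
  have vnT: "v \<notin> T" using vT in_own_span TB csB by blast
  have li: "lin_indpt (insert v T)"
    using lin_dep_iff_in_span[OF _ TB(2) vc vnT] vT TB(1) csB by auto
  have "card (insert v T) \<le> rank A"
    using card_le_rank_of_span[OF A _ li] TB(1) sub v by auto
  moreover have "finite T" using TB(1) finite_subset by blast
  ultimately show ?thesis using rB vnT by auto
qed

lemma rank_mult_le:
  assumes A: "A \<in> carrier_mat n na" and B: "B \<in> carrier_mat na nb"
  shows "rank (A * B) \<le> rank A"
proof (rule rank_le_of_span[OF A])
  show "A * B \<in> carrier_mat n nb" using A B by auto
  show "set (cols (A * B)) \<subseteq> span (set (cols A))"
  proof
    fix x assume "x \<in> set (cols (A * B))"
    then obtain j where "j < nb" "x = A *\<^sub>v col B j"
      using A B by (metis carrier_matD(2) col_mult2 cols_length cols_nth in_set_conv_nth index_mult_mat(3))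
    then show "x \<in> span (set (cols A))" using span_cols_eq_image[OF A] B by auto
  qed
qed

lemma rank_smult_le:
  assumes A: "A \<in> carrier_mat n m"
  shows "rank (c \<cdot>\<^sub>m A) \<le> rank A"
proof -
  have "c \<cdot>\<^sub>m A = A * (c \<cdot>\<^sub>m 1\<^sub>m m)"
    using mult_smult_distrib[OF A one_carrier_mat] A by auto
  then show ?thesis using rank_mult_le[OF A, of "c \<cdot>\<^sub>m 1\<^sub>m m" m] by auto
qed

lemma rank_mult_GL:
  assumes A: "A \<in> carrier_mat n m" and B: "B \<in> GL m"
  shows "rank (A * B) = rank A"
proof -
  obtain C where B: "B \<in> carrier_mat m m" and C: "C \<in> carrier_mat m m" and "B * C = 1\<^sub>m m"
    using B by (rule GLE)
  then have "A * B * C = A" using A by (simp add: assoc_mult_mat[OF A B C])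
  then have "rank A \<le> rank (A * B)"
    using rank_mult_le[of "A * B" m C m] A B C by (metis mult_carrier_mat)
  then show ?thesis using rank_mult_le[OF A B] by auto
qed

lemma rank_mult_minus_smult_one_le:
  assumes X: "X \<in> carrier_mat n n" and Y: "Y \<in> carrier_mat n n"
  shows "rank (X * Y - c \<cdot>\<^sub>m 1\<^sub>m n) \<le> rank (X - c \<cdot>\<^sub>m 1\<^sub>m n) + rank (Y - 1\<^sub>m n)"
proof -
  have X1: "X - c \<cdot>\<^sub>m 1\<^sub>m n \<in> carrier_mat n n" and Y1: "Y - 1\<^sub>m n \<in> carrier_mat n n" by auto
  have "X * Y - c \<cdot>\<^sub>m 1\<^sub>m n = (X - c \<cdot>\<^sub>m 1\<^sub>m n) * Y + c \<cdot>\<^sub>m (Y - 1\<^sub>m n)"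
    using X Y by (intro eq_matI) (auto simp: algebra_simps scalar_prod_def if_distrib[of "\<lambda>x. _ * (_ * x)"] cong: if_cong)
  then have "rank (X * Y - c \<cdot>\<^sub>m 1\<^sub>m n) \<le> rank ((X - c \<cdot>\<^sub>m 1\<^sub>m n) * Y) + rank (c \<cdot>\<^sub>m (Y - 1\<^sub>m n))"
    using rank_subadditive[of "(X - c \<cdot>\<^sub>m 1\<^sub>m n) * Y" n "c \<cdot>\<^sub>m (Y - 1\<^sub>m n)"] X1 Y Y1 by auto
  then show ?thesis using rank_mult_le[OF X1 Y] rank_smult_le[OF Y1, of c] by linarith
qed

lemma rank_mult_minus_one_le:
  assumes "X \<in> carrier_mat n n" and "Y \<in> carrier_mat n n"
  shows "rank (X * Y - 1\<^sub>m n) \<le> rank (X - 1\<^sub>m n) + rank (Y - 1\<^sub>m n)"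
proof -
  have "1 \<cdot>\<^sub>m 1\<^sub>m n = (1\<^sub>m n :: 'a mat)" by (intro eq_matI) auto
  then show ?thesis using rank_mult_minus_smult_one_le[OF assms, of 1] by simp
qed

lemma rank_multrow_mat_minus_one_le:
  assumes "i < n"
  shows "rank (multrow_mat n i e - 1\<^sub>m n) \<le> 1"
  by (rule rank_le_1_product_entries[where f = "\<lambda>r. if r = i then e - 1 else 0"
        and g = "\<lambda>c. if c = i then 1 else 0"]) (auto simp: multrow_mat_def)

lemma rank_outer_mat_le:
  assumes "v \<in> carrier_vec n"
  shows "rank (outer_mat v w) \<le> 1"
  by (rule rank_le_1_product_entries[where f = "\<lambda>i. v $ i" and g = "\<lambda>j. w $ j"])
    (use assms in \<open>auto simp: outer_mat_def\<close>)

lemma rank_less_by_functional: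
  assumes A: "A \<in> carrier_mat n na" and B: "B \<in> carrier_mat n nb"
    and image: "\<And>y. y \<in> carrier_vec nb \<Longrightarrow> \<exists>u \<in> carrier_vec na. B *\<^sub>v y = A *\<^sub>v u"
    and x: "x \<in> carrier_vec na" and z: "z \<in> carrier_vec n" and zAx: "z \<bullet> (A *\<^sub>v x) \<noteq> 0"
    and zB: "\<And>y. y \<in> carrier_vec nb \<Longrightarrow> z \<bullet> (B *\<^sub>v y) = 0"
  shows "rank B < rank A"
proof (rule rank_less_of_span[OF A B])
  have "set (cols B) \<subseteq> span (set (cols B))"
    using in_own_span B cols_dim by blast
  also have "\<dots> \<subseteq> span (set (cols A))"
    using image unfolding span_cols_eq_image[OF A] span_cols_eq_image[OF B] by blast
  finally show "set (cols B) \<subseteq> span (set (cols A))" .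
  show "A *\<^sub>v x \<in> span (set (cols A))" using span_cols_eq_image[OF A] x by auto
  show "A *\<^sub>v x \<notin> span (set (cols B))"
    using span_cols_eq_image[OF B] zB zAx by auto
qed

lemma rank_minus_outer_mat_less:
  assumes A: "A \<in> carrier_mat n nc" and x: "x \<in> carrier_vec nc" and z: "z \<in> carrier_vec n"
    and zAx: "z \<bullet> (A *\<^sub>v x) = 1"
  shows "rank (A - outer_mat (A *\<^sub>v x) (transpose_mat A *\<^sub>v z)) < rank A"
proof -
  define w where "w = transpose_mat A *\<^sub>v z"
  define E where "E = outer_mat (A *\<^sub>v x) w"
  have w: "w \<in> carrier_vec nc" using A z by (simp add: w_def)
  have E: "E \<in> carrier_mat n nc" using A x w by (simp add: E_def)
  have wz: "w \<bullet> y = z \<bullet> (A *\<^sub>v y)" if "y \<in> carrier_vec nc" for y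
    unfolding w_def using transpose_vec_mult_scalar[OF A that z] .
  have AE: "(A - E) *\<^sub>v y = A *\<^sub>v (y - (w \<bullet> y) \<cdot>\<^sub>v x)" if y: "y \<in> carrier_vec nc" for y
    using A E x y w by (simp add: minus_mult_distrib_mat_vec mult_minus_distrib_mat_vec
        mult_mat_vec E_def outer_mat_mult_vec)
  show ?thesis unfolding w_def[symmetric] E_def[symmetric]
  proof (rule rank_less_by_functional[OF A _ _ x z])
    show "A - E \<in> carrier_mat n nc" using E by (rule minus_carrier_mat)
    show "\<exists>u \<in> carrier_vec nc. (A - E) *\<^sub>v y = A *\<^sub>v u" if "y \<in> carrier_vec nc" for y
      using AE[OF that] that x by auto
    show "z \<bullet> ((A - E) *\<^sub>v y) = 0" if y: "y \<in> carrier_vec nc" for y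
      using AE[OF y] wz[OF y] zAx A x y z
      by (simp add: mult_minus_distrib_mat_vec mult_mat_vec scalar_prod_minus_distrib)
  qed (use zAx in simp)
qed

lemma exists_mult_vec_nonzero:
  assumes A: "A \<in> carrier_mat n nc" and pos: "0 < rank A"
  obtains x where "x \<in> carrier_vec nc" "A *\<^sub>v x \<noteq> 0\<^sub>v n"
proof -
  have "A = 0\<^sub>m n nc" if zero: "\<forall>x \<in> carrier_vec nc. A *\<^sub>v x = 0\<^sub>v n"
  proof (rule eq_matI)
    fix i j assume "i < dim_row (0\<^sub>m n nc :: 'a mat)" "j < dim_col (0\<^sub>m n nc :: 'a mat)"
    then have ij: "i < n" "j < nc" by auto
    have "A $$ (i, j) = (A *\<^sub>v unit_vec nc j) $ i"
      using A ij by (simp add: scalar_prod_right_unit)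
    then show "A $$ (i, j) = 0\<^sub>m n nc $$ (i, j)" using zero ij by simp
  qed (use A in auto)
  then show ?thesis using that pos rank_0I by fastforce
qed

lemma rank_reducing_factorE:
  assumes h: "h \<in> GL n" and lam: "lam \<noteq> 0" and pos: "0 < rank (h - lam \<cdot>\<^sub>m 1\<^sub>m n)"
  obtains t where "t \<in> GL n" "rank (t - 1\<^sub>m n) \<le> 1"
    "rank (h - lam \<cdot>\<^sub>m t) < rank (h - lam \<cdot>\<^sub>m 1\<^sub>m n)"
proof -
  obtain hi where h: "h \<in> carrier_mat n n" and hi: "hi \<in> carrier_mat n n" and "hi * h = 1\<^sub>m n"
    using h by (rule GLE)
  define A where "A = h - lam \<cdot>\<^sub>m 1\<^sub>m n"
  have A: "A \<in> carrier_mat n n" by (auto simp: A_def)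
  obtain x where x: "x \<in> carrier_vec n" and Ax: "A *\<^sub>v x \<noteq> 0\<^sub>v n"
    using exists_mult_vec_nonzero[OF A] pos unfolding A_def by blast
  define v where "v = A *\<^sub>v x"
  have v: "v \<in> carrier_vec n" using A x by (simp add: v_def)
  have "hi *\<^sub>v (h *\<^sub>v v) = v"
    using assoc_mult_mat_vec[OF hi h v] \<open>hi * h = 1\<^sub>m n\<close> v by simp
  moreover have "hi *\<^sub>v 0\<^sub>v n = 0\<^sub>v n" using hi by (intro eq_vecI) auto
  ultimately have hv: "h *\<^sub>v v \<noteq> 0\<^sub>v n" using Ax unfolding v_def by metis
  obtain z0 where z0: "z0 \<in> carrier_vec n" "z0 \<bullet> v \<noteq> 0" "z0 \<bullet> (h *\<^sub>v v) \<noteq> 0"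
    using exists_scalar_prod_nonzero_both[of v n "h *\<^sub>v v"] v hv Ax h unfolding v_def by auto
  define z where "z = (1 / (z0 \<bullet> v)) \<cdot>\<^sub>v z0"
  define s where "s = z \<bullet> (h *\<^sub>v v)"
  have z: "z \<in> carrier_vec n" using z0 by (simp add: z_def)
  have zv: "z \<bullet> v = 1" using z0 v by (simp add: z_def)
  have s: "s \<noteq> 0" using z0 v h by (simp add: s_def z_def)
  define E where "E = outer_mat v (transpose_mat A *\<^sub>v z)"
  have E: "E \<in> carrier_mat n n" using v A z by (simp add: E_def)
  have "(transpose_mat A *\<^sub>v z) \<bullet> v = z \<bullet> (h *\<^sub>v v - lam \<cdot>\<^sub>v v)"
    using transpose_vec_mult_scalar[OF A v z] h v
    by (simp add: A_def minus_mult_distrib_mat_vec smult_one_mult_mat_vec)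
  also have "\<dots> = s - lam"
    using z v h zv by (simp add: s_def scalar_prod_minus_distrib)
  finally have EE: "E * E = (s - lam) \<cdot>\<^sub>m E"
    unfolding E_def using outer_mat_mult_outer_mat[OF v, of "transpose_mat A *\<^sub>v z"] A z by simp
  define t where "t = 1\<^sub>m n + (1 / lam) \<cdot>\<^sub>m E"
  have "t \<in> GL n"
  proof (rule GLI)
    show "t * (1\<^sub>m n + - (1 / s) \<cdot>\<^sub>m E) = 1\<^sub>m n" "(1\<^sub>m n + - (1 / s) \<cdot>\<^sub>m E) * t = 1\<^sub>m n"
      unfolding t_def by (rule one_plus_smult_mult_one_plus_smult[OF E EE];
          use lam s in \<open>simp add: field_simps\<close>)+
  qed (use E in \<open>auto simp: t_def\<close>)
  moreover have "rank (t - 1\<^sub>m n) \<le> 1"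
  proof -
    have "t - 1\<^sub>m n = (1 / lam) \<cdot>\<^sub>m E" using E by (intro eq_matI) (auto simp: t_def)
    then show ?thesis
      using rank_smult_le[OF E, of "1 / lam"] rank_outer_mat_le[OF v, of "transpose_mat A *\<^sub>v z"]
      unfolding E_def by (metis order_trans)
  qed
  moreover have "rank (h - lam \<cdot>\<^sub>m t) < rank (h - lam \<cdot>\<^sub>m 1\<^sub>m n)"
  proof -
    have "h - lam \<cdot>\<^sub>m t = A - E"
      using h E lam by (intro eq_matI) (auto simp: t_def A_def algebra_simps)
    then show ?thesis
      using rank_minus_outer_mat_less[OF A x z] zv unfolding A_def E_def v_def by simp
  qed
  ultimately show ?thesis using that by blast
qed

lemma exists_factorization_trading_rank:
  assumes g: "g \<in> GL n" and lam: "lam \<noteq> 0" and j: "j \<le> rank (g - lam \<cdot>\<^sub>m 1\<^sub>m n)"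
  shows "\<exists>h k. h \<in> GL n \<and> k \<in> GL n \<and> g = h * k
    \<and> rank (h - lam \<cdot>\<^sub>m 1\<^sub>m n) + j \<le> rank (g - lam \<cdot>\<^sub>m 1\<^sub>m n) \<and> rank (k - 1\<^sub>m n) \<le> j"
  using j
proof (induction j)
  case 0
  have "1\<^sub>m n - 1\<^sub>m n = (0\<^sub>m n n :: 'a mat)" by (intro eq_matI) auto
  then have "rank (1\<^sub>m n - 1\<^sub>m n :: 'a mat) = 0" by (simp only: rank_0I)
  moreover have "1\<^sub>m n \<in> GL n" by (rule GLI[of _ n "1\<^sub>m n"]) auto
  moreover have "g = g * 1\<^sub>m n" using g by (auto simp: GL_def)
  ultimately show ?case using g by auto
next
  case (Suc j)
  then obtain h k where hk: "h \<in> GL n" "k \<in> GL n" "g = h * k"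
    and rh: "rank (h - lam \<cdot>\<^sub>m 1\<^sub>m n) + j \<le> rank (g - lam \<cdot>\<^sub>m 1\<^sub>m n)"
    and rk: "rank (k - 1\<^sub>m n) \<le> j" by auto
  show ?case
  proof (cases "rank (h - lam \<cdot>\<^sub>m 1\<^sub>m n) = 0")
    case True
    then have "rank (h - lam \<cdot>\<^sub>m 1\<^sub>m n) + Suc j \<le> rank (g - lam \<cdot>\<^sub>m 1\<^sub>m n)"
      using Suc.prems by simp
    moreover have "rank (k - 1\<^sub>m n) \<le> Suc j" using rk by simp
    ultimately show ?thesis using hk by blast
  next
    case False
    then obtain t where t: "t \<in> GL n" "rank (t - 1\<^sub>m n) \<le> 1"
      "rank (h - lam \<cdot>\<^sub>m t) < rank (h - lam \<cdot>\<^sub>m 1\<^sub>m n)"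
      using rank_reducing_factorE[OF hk(1) lam] by blast
    obtain ti where tc: "t \<in> carrier_mat n n" and ti: "ti \<in> carrier_mat n n"
      and tti: "t * ti = 1\<^sub>m n" and tit: "ti * t = 1\<^sub>m n" using t(1) by (rule GLE)
    have tiGL: "ti \<in> GL n" using GLI[OF ti tc tit tti] .
    have hc: "h \<in> carrier_mat n n" and kc: "k \<in> carrier_mat n n" using hk by (auto simp: GL_def)
    have "g = h * ti * (t * k)" using mult_inverse_pair_cancel[OF hc ti tc kc tit] hk(3) by simp
    moreover have "h * ti - lam \<cdot>\<^sub>m 1\<^sub>m n = (h - lam \<cdot>\<^sub>m t) * ti"
      using hc tc ti tti by (simp add: minus_mult_distrib_mat[of _ n n] mult_smult_assoc_mat)
    then have "rank (h * ti - lam \<cdot>\<^sub>m 1\<^sub>m n) = rank (h - lam \<cdot>\<^sub>m t)"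
      using rank_mult_GL[OF _ tiGL, of "h - lam \<cdot>\<^sub>m t"] minus_carrier_mat[of "lam \<cdot>\<^sub>m t" n n h] tc
      by auto
    moreover have "rank (t * k - 1\<^sub>m n) \<le> rank (t - 1\<^sub>m n) + rank (k - 1\<^sub>m n)"
      using rank_mult_minus_one_le[OF tc kc] .
    ultimately show ?thesis
      using GL_mult[OF hk(1) tiGL] GL_mult[OF t(1) hk(2)] t(2,3) rh rk
      by (intro exI[of _ "h * ti"] exI[of _ "t * k"]) auto
  qed
qed

lemma SL_factorization_of_GL_factorization:
  assumes n: "0 < n" and g: "g \<in> SL n" and h: "h \<in> GL n" and k: "k \<in> GL n" and ghk: "g = h * k"
  obtains h' k' where "h' \<in> SL n" "k' \<in> SL n" "g = h' * k'"
    "rank (h' - c \<cdot>\<^sub>m 1\<^sub>m n) \<le> rank (h - c \<cdot>\<^sub>m 1\<^sub>m n) + 1"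
    "rank (k' - 1\<^sub>m n) \<le> rank (k - 1\<^sub>m n) + 1"
proof -
  have hc: "h \<in> carrier_mat n n" and kc: "k \<in> carrier_mat n n" and d: "det k \<noteq> 0"
    using h k by (auto simp: GL_iff_det)
  define D where "D = multrow_mat n 0 (det k)"
  define Di where "Di = multrow_mat n 0 (inverse (det k))"
  have D: "D \<in> carrier_mat n n" and Di: "Di \<in> carrier_mat n n" by (auto simp: D_def Di_def)
  have "D * Di = 1\<^sub>m n" unfolding D_def Di_def using multrow_mat_inv[OF n d] .
  then have "g = h * D * (Di * k)" using mult_inverse_pair_cancel[OF hc D Di kc] ghk by simp
  moreover have "h * D \<in> SL n" and "Di * k \<in> SL n"
    using g ghk hc kc D Di d n
    by (auto simp: SL_def det_mult[of _ n] D_def Di_def det_multrow_mat)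
  moreover have "rank (h * D - c \<cdot>\<^sub>m 1\<^sub>m n) \<le> rank (h - c \<cdot>\<^sub>m 1\<^sub>m n) + 1"
    using rank_mult_minus_smult_one_le[OF hc D, of c] rank_multrow_mat_minus_one_le[OF n]
    unfolding D_def by (meson add_left_mono order_trans)
  moreover have "rank (Di * k - 1\<^sub>m n) \<le> rank (k - 1\<^sub>m n) + 1"
    using rank_mult_minus_one_le[OF Di kc] rank_multrow_mat_minus_one_le[OF n, of "inverse (det k)"]
    unfolding Di_def by linarith
  ultimately show ?thesis using that by blast
qed

end

lemma split_rank_bounds:
  fixes a b r j d :: nat and phi1 phi2 :: real
  assumes "r \<le> a + b" "a + j \<le> r + d" "b \<le> j + d"
    and "real j \<le> phi2" "phi2 < real j + 1" "phi1 + phi2 = real r"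
  shows "\<bar>real a - phi1\<bar> \<le> real d + 1 \<and> \<bar>real b - phi2\<bar> \<le> real d + 1"
  using assms by linarith

theorem lemma2p3:
  fixes g :: "'a::field mat" and n r :: nat and lam :: 'a and phi1 phi2 :: real
  assumes "n \<ge> 1"
    and "g \<in> GL n"
    and "lam \<noteq> 0"
    and "vec_space.rank n (g - lam \<cdot>\<^sub>m 1\<^sub>m n) = r"
    and "phi1 \<ge> 0" and "phi2 \<ge> 0" and "phi1 + phi2 = real r"
  shows "(\<exists>h k. h \<in> GL n \<and> k \<in> GL n \<and> g = h * k
            \<and> \<bar>real (vec_space.rank n (h - lam \<cdot>\<^sub>m 1\<^sub>m n)) - phi1\<bar> \<le> 2
            \<and> \<bar>real (vec_space.rank n (k - 1\<^sub>m n)) - phi2\<bar> \<le> 2)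
       \<and> (g \<in> SL n \<longrightarrow>
          (\<exists>h k. h \<in> SL n \<and> k \<in> SL n \<and> g = h * k
            \<and> \<bar>real (vec_space.rank n (h - lam \<cdot>\<^sub>m 1\<^sub>m n)) - phi1\<bar> \<le> 3
            \<and> \<bar>real (vec_space.rank n (k - 1\<^sub>m n)) - phi2\<bar> \<le> 3))"
proof -
  interpret vec_space "TYPE('a)" n .
  define j where "j = nat \<lfloor>phi2\<rfloor>"
  have j: "real j \<le> phi2" "phi2 < real j + 1" using assms(6) by (auto simp: j_def)
  then have "j \<le> r" using assms(5,7) by linarith
  then obtain h k where hk: "h \<in> GL n" "k \<in> GL n" "g = h * k"
    and bounds: "rank (h - lam \<cdot>\<^sub>m 1\<^sub>m n) + j \<le> r" "rank (k - 1\<^sub>m n) \<le> j"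
    using exists_factorization_trading_rank[OF assms(2,3)] assms(4) by blast
  have lower: "r \<le> rank (h' - lam \<cdot>\<^sub>m 1\<^sub>m n) + rank (k' - 1\<^sub>m n)"
    if "h' \<in> carrier_mat n n" "k' \<in> carrier_mat n n" "g = h' * k'" for h' k'
    using rank_mult_minus_smult_one_le[OF that(1,2), of lam] that(3) assms(4) by simp
  show ?thesis
  proof (intro conjI impI)
    show "\<exists>h k. h \<in> GL n \<and> k \<in> GL n \<and> g = h * k
        \<and> \<bar>real (rank (h - lam \<cdot>\<^sub>m 1\<^sub>m n)) - phi1\<bar> \<le> 2 \<and> \<bar>real (rank (k - 1\<^sub>m n)) - phi2\<bar> \<le> 2"
      using split_rank_bounds[where d = 0, OF lower[of h k] _ _ j assms(7)] hk bounds
      by (force simp: GL_def)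
  next
    assume "g \<in> SL n"
    then obtain h' k' where hk': "h' \<in> SL n" "k' \<in> SL n" "g = h' * k'"
      and "rank (h' - lam \<cdot>\<^sub>m 1\<^sub>m n) \<le> rank (h - lam \<cdot>\<^sub>m 1\<^sub>m n) + 1"
        "rank (k' - 1\<^sub>m n) \<le> rank (k - 1\<^sub>m n) + 1"
      using SL_factorization_of_GL_factorization[OF _ _ hk] assms(1) by auto
    then show "\<exists>h k. h \<in> SL n \<and> k \<in> SL n \<and> g = h * k
        \<and> \<bar>real (rank (h - lam \<cdot>\<^sub>m 1\<^sub>m n)) - phi1\<bar> \<le> 3 \<and> \<bar>real (rank (k - 1\<^sub>m n)) - phi2\<bar> \<le> 3"
      using split_rank_bounds[where d = 1, OF lower[of h' k'] _ _ j assms(7)] bounds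
      by (force simp: SL_def)
  qed
qed

end
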